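(* Let $G=(S,C,\emptyset)$ be a spider graph with weight $r$ and empty head. If $G$ is thin ($r\ge2$), then $\tilde\gamma_{gr}^{\times2}(G)=2r$ and $(c_1,\dots,c_r,s_1,\dots,s_r)$ is an MDNS of $G$. If $G$ is thick ($r\ge3$), then $\tilde\gamma_{gr}^{\times2}(G)=r+2$ and $(s_1,\dots,s_r,c_1,c_2)$ is an MDNS of $G$.
   Context: Graphs are finite, simple, undirected; $N[v]$ closed neighborhood. A sequence of distinct vertices $(v_1,\dots,v_k)$ is a double neighborhood sequence (DNS) if for each $i$ some $w\in N[v_i]$ satisfies $|\{j<i:w\in N[v_j]\}|\le1$; an MDNS is a DNS of maximum length and $\tilde\gamma_{gr}^{\times2}$ is that length. A spider graph $(S,C,\emptyset)$ with weight $r$ has vertex set $S\cup C$ with $S=\{s_1,\dots,s_r\}$ stable and $C=\{c_1,\dots,c_r\}$ a clique; thin: $s_ic_j\in E$ iff $i=j$; thick: $s_ic_j\in E$ iff $i\neq j$. *)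

theory Defs
  imports Main
begin

text \<open>A finite simple graph is given by a vertex set V and a symmetric irreflexive
adjacency relation E (only its restriction to V matters).\<close>

definition closed_nbhd :: "'a set \<Rightarrow> ('a \<Rightarrow> 'a \<Rightarrow> bool) \<Rightarrow> 'a \<Rightarrow> 'a set" where
  "closed_nbhd V E v = insert v {w \<in> V. E v w}"

definition is_DNS :: "'a set \<Rightarrow> ('a \<Rightarrow> 'a \<Rightarrow> bool) \<Rightarrow> 'a list \<Rightarrow> bool" where
  "is_DNS V E vs \<longleftrightarrow> distinct vs \<and> set vs \<subseteq> V \<and>
     (\<forall>i < length vs. \<exists>w \<in> closed_nbhd V E (vs ! i).
        card {j. j < i \<and> w \<in> closed_nbhd V E (vs ! j)} \<le> 1)"

definition is_MDNS :: "'a set \<Rightarrow> ('a \<Rightarrow> 'a \<Rightarrow> bool) \<Rightarrow> 'a list \<Rightarrow> bool" where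
  "is_MDNS V E vs \<longleftrightarrow> is_DNS V E vs \<and> (\<forall>ws. is_DNS V E ws \<longrightarrow> length ws \<le> length vs)"

definition gamma_gr2 :: "'a set \<Rightarrow> ('a \<Rightarrow> 'a \<Rightarrow> bool) \<Rightarrow> nat" where
  "gamma_gr2 V E = Max {length vs | vs. is_DNS V E vs}"

text \<open>Spider graphs (S, C, empty head) of weight r: vertices s_1..s_r, c_1..c_r.\<close>
datatype spv = Sv nat | Cv nat

definition spider_V :: "nat \<Rightarrow> spv set" where
  "spider_V r = Sv ` {1..r} \<union> Cv ` {1..r}"

fun thin_E :: "spv \<Rightarrow> spv \<Rightarrow> bool" where
  "thin_E (Cv i) (Cv j) = (i \<noteq> j)"
| "thin_E (Sv i) (Cv j) = (i = j)"
| "thin_E (Cv j) (Sv i) = (i = j)"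
| "thin_E (Sv i) (Sv j) = False"

fun thick_E :: "spv \<Rightarrow> spv \<Rightarrow> bool" where
  "thick_E (Cv i) (Cv j) = (i \<noteq> j)"
| "thick_E (Sv i) (Cv j) = (i \<noteq> j)"
| "thick_E (Cv j) (Sv i) = (i \<noteq> j)"
| "thick_E (Sv i) (Sv j) = False"

end

theory Submission
  imports Defs
begin

text \<open>
Say that \<open>u\<close> dominates \<open>w\<close> if \<open>w \<in> N[u]\<close>. In the thin spider, \<open>s\<^sub>i\<close> is dominated
only by \<open>s\<^sub>i\<close> and \<open>c\<^sub>i\<close>, so it serves as the witness for both of them whatever their
order: every enumeration of the \<open>2r\<close> vertices is a DNS.

In the thick spider, \<open>c\<^sub>k\<close> dominates every vertex except \<open>s\<^sub>k\<close>. Since a witness may be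
dominated by at most one earlier vertex, at most two C-vertices precede the vertex it
witnesses, and if two do, the witness is some \<open>s\<^sub>m\<close> that does not occur earlier either. So
no vertex follows three C-vertices, and when the last vertex is the third C-vertex, the
\<open>s\<^sub>m\<close> witnessing it never occurs. In both cases at most \<open>r + 2\<close> vertices are used, and
\<open>s\<^sub>1, \<dots>, s\<^sub>r, c\<^sub>1, c\<^sub>2\<close> attains this.
\<close>

definition dom_count :: "'a set \<Rightarrow> ('a \<Rightarrow> 'a \<Rightarrow> bool) \<Rightarrow> 'a list \<Rightarrow> 'a \<Rightarrow> nat" where
  "dom_count V E xs w = length (filter (\<lambda>u. w \<in> closed_nbhd V E u) xs)"

lemma self_mem_closed_nbhd: "v \<in> closed_nbhd V E v"
  unfolding closed_nbhd_def by simp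

lemma closed_nbhd_subset: "v \<in> V \<Longrightarrow> closed_nbhd V E v \<subseteq> V"
  unfolding closed_nbhd_def by auto

lemma dom_count_append [simp]:
  "dom_count V E (xs @ ys) w = dom_count V E xs w + dom_count V E ys w"
  by (simp add: dom_count_def)

lemma dom_count_singleton [simp]:
  "dom_count V E [u] w = (if w \<in> closed_nbhd V E u then 1 else 0)"
  by (simp add: dom_count_def)

lemma card_dominators_le_dom_count:
  "card {u \<in> set xs. w \<in> closed_nbhd V E u} \<le> dom_count V E xs w"
  unfolding dom_count_def by (metis card_length set_filter)

lemma is_DNS_iff_take:
  "is_DNS V E vs \<longleftrightarrow> distinct vs \<and> set vs \<subseteq> V \<and>
     (\<forall>i < length vs. \<exists>w \<in> closed_nbhd V E (vs ! i). dom_count V E (take i vs) w \<le> 1)"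
proof -
  have "card {j. j < i \<and> w \<in> closed_nbhd V E (vs ! j)} = dom_count V E (take i vs) w"
    if "i < length vs" for i w
    using that by (simp add: dom_count_def length_filter_conv_card min_def conj_commute cong: conj_cong)
  then show ?thesis
    unfolding is_DNS_def by simp
qed

lemma is_DNS_snoc:
  "is_DNS V E (vs @ [v]) \<longleftrightarrow> is_DNS V E vs \<and> v \<in> V \<and> v \<notin> set vs \<and>
     (\<exists>w \<in> closed_nbhd V E v. dom_count V E vs w \<le> 1)"
proof -
  have "(\<forall>i < length vs. \<exists>w \<in> closed_nbhd V E ((vs @ [v]) ! i). dom_count V E (take i (vs @ [v])) w \<le> 1)
    \<longleftrightarrow> (\<forall>i < length vs. \<exists>w \<in> closed_nbhd V E (vs ! i). dom_count V E (take i vs) w \<le> 1)"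
    by (simp add: nth_append)
  then show ?thesis
    unfolding is_DNS_iff_take length_append_singleton All_less_Suc by auto
qed

lemma is_DNS_length_le_card: "is_DNS V E vs \<Longrightarrow> finite V \<Longrightarrow> length vs \<le> card V"
  unfolding is_DNS_def by (metis card_mono distinct_card)

lemma gamma_gr2_eq_length_if_MDNS:
  assumes "is_MDNS V E vs"
  shows "gamma_gr2 V E = length vs"
  unfolding gamma_gr2_def
proof (rule Max_eqI)
  show "n \<le> length vs" if "n \<in> {length ws |ws. is_DNS V E ws}" for n
    using that assms by (auto simp: is_MDNS_def)
  then show "finite {length ws |ws. is_DNS V E ws}"
    by (meson finite_nat_set_iff_bounded_le)
  show "length vs \<in> {length ws |ws. is_DNS V E ws}"
    using assms by (auto simp: is_MDNS_def)
qed

lemma is_DNS_if_dominator_sets_le_2: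
  assumes "finite V" "distinct vs" "set vs \<subseteq> V"
    and witness: "\<And>v. v \<in> set vs \<Longrightarrow>
       \<exists>w \<in> closed_nbhd V E v. card {u \<in> V. w \<in> closed_nbhd V E u} \<le> 2"
  shows "is_DNS V E vs"
  unfolding is_DNS_iff_take
proof (intro conjI allI impI)
  fix i assume i: "i < length vs"
  let ?v = "vs ! i" and ?D = "\<lambda>w. {u \<in> V. w \<in> closed_nbhd V E u}"
  obtain w where w: "w \<in> closed_nbhd V E ?v" "card (?D w) \<le> 2"
    using witness i nth_mem by blast
  have "?v \<notin> set (take i vs)"
    using assms(2) i by (auto simp: in_set_conv_nth nth_eq_iff_index_eq)
  then have "{u. w \<in> closed_nbhd V E u} \<inter> set (take i vs) \<subseteq> ?D w - {?v}"
    using assms(3) set_take_subset by fastforce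
  then have "card ({u. w \<in> closed_nbhd V E u} \<inter> set (take i vs)) \<le> card (?D w - {?v})"
    using assms(1) by (intro card_mono) auto
  also have "\<dots> = card (?D w) - 1"
    using w(1) assms(3) i by (simp add: card_Diff_singleton_if subset_iff)
  also have "\<dots> \<le> 1"
    using w(2) by simp
  finally show "\<exists>w \<in> closed_nbhd V E ?v. dom_count V E (take i vs) w \<le> 1"
    using w(1) assms(2) by (auto simp: dom_count_def distinct_length_filter)
qed (use assms in auto)

lemma is_DNS_if_independent:
  assumes "distinct vs" "set vs \<subseteq> V" "\<And>u v. u \<in> set vs \<Longrightarrow> v \<in> set vs \<Longrightarrow> \<not> E u v"
  shows "is_DNS V E vs"
  unfolding is_DNS_iff_take
proof (intro conjI allI impI)
  fix i assume i: "i < length vs"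
  have "u \<noteq> vs ! i" if "u \<in> set (take i vs)" for u
    using that assms(1) i by (auto simp: in_set_conv_nth nth_eq_iff_index_eq)
  moreover have "\<not> E u (vs ! i)" if "u \<in> set (take i vs)" for u
    using that assms(3) i by (meson in_set_takeD nth_mem)
  ultimately have "dom_count V E (take i vs) (vs ! i) = 0"
    by (auto simp: dom_count_def closed_nbhd_def filter_empty_conv)
  then show "\<exists>w \<in> closed_nbhd V E (vs ! i). dom_count V E (take i vs) w \<le> 1"
    by (auto simp: closed_nbhd_def)
qed (use assms in auto)

lemma card_spider_V: "card (spider_V r) = 2 * r"
proof -
  have "card (spider_V r) = card (Sv ` {1..r}) + card (Cv ` {1..r})"
    unfolding spider_V_def by (rule card_Un_disjoint) auto
  also have "\<dots> = 2 * r"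
    by (subst (1 2) card_image) (auto simp: inj_on_def)
  finally show ?thesis .
qed

lemma card_spider_subset:
  assumes "A \<subseteq> spider_V r"
  shows "card A + card (Sv ` {1..r} - A) = r + card (A \<inter> range Cv)"
proof -
  let ?S = "Sv ` {1..r}"
  have fin: "finite A"
    using assms finite_subset unfolding spider_V_def by blast
  have "A = (A \<inter> ?S) \<union> (A \<inter> range Cv)"
    using assms by (auto simp: spider_V_def)
  also have "card \<dots> = card (A \<inter> ?S) + card (A \<inter> range Cv)"
    using fin by (intro card_Un_disjoint) auto
  finally have "card A = card (A \<inter> ?S) + card (A \<inter> range Cv)" .
  moreover have "card (A \<inter> ?S) + card (?S - A) = card ?S"
    using card_Int_Diff[of ?S A] by (simp add: Int_commute)
  moreover have "card ?S = r"
    by (subst card_image) (auto simp: inj_on_def)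
  ultimately show ?thesis
    by simp
qed

lemma thin_dominators_Sv:
  assumes "i \<in> {1..r}"
  shows "{u \<in> spider_V r. Sv i \<in> closed_nbhd (spider_V r) thin_E u} = {Sv i, Cv i}"
  using assms by (auto simp: spider_V_def closed_nbhd_def elim: thin_E.elims)

lemma is_DNS_thin:
  assumes "distinct vs" "set vs \<subseteq> spider_V r"
  shows "is_DNS (spider_V r) thin_E vs"
proof (rule is_DNS_if_dominator_sets_le_2)
  fix v assume "v \<in> set vs"
  then obtain i where i: "i \<in> {1..r}" "v = Sv i \<or> v = Cv i"
    using assms(2) by (auto simp: spider_V_def)
  then have "Sv i \<in> closed_nbhd (spider_V r) thin_E v"
    by (auto simp: closed_nbhd_def spider_V_def)
  then show "\<exists>w \<in> closed_nbhd (spider_V r) thin_E v.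
      card {u \<in> spider_V r. w \<in> closed_nbhd (spider_V r) thin_E u} \<le> 2"
    using thin_dominators_Sv[OF i(1)] by (intro bexI[of _ "Sv i"]) (auto simp: card_insert_if)
qed (use assms in \<open>auto simp: spider_V_def\<close>)

lemma thick_closed_nbhd_Cv:
  "w \<in> spider_V r \<Longrightarrow> w \<in> closed_nbhd (spider_V r) thick_E (Cv k) \<longleftrightarrow> w \<noteq> Sv k"
  by (cases w) (auto simp: closed_nbhd_def)

lemma thick_dom_count_map_Sv:
  assumes "distinct ks"
  shows "dom_count (spider_V r) thick_E (map Sv ks) (Sv m) = (if m \<in> set ks then 1 else 0)"
proof -
  have "filter (\<lambda>u. Sv m \<in> closed_nbhd (spider_V r) thick_E u) (map Sv ks) = map Sv (filter (\<lambda>j. j = m) ks)"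
    by (simp add: filter_map comp_def closed_nbhd_def eq_commute)
  moreover have "{j. j = m} \<inter> set ks = (if m \<in> set ks then {m} else {})"
    by auto
  ultimately show ?thesis
    using assms by (simp add: dom_count_def distinct_length_filter)
qed

lemma is_DNS_thick:
  assumes "r \<ge> 2"
  shows "is_DNS (spider_V r) thick_E (map Sv [1..<r+1] @ [Cv 1, Cv 2])"
proof -
  let ?V = "spider_V r"
  define ss where "ss = map Sv [1..<r+1]"
  have in_V: "Sv 1 \<in> ?V" "Sv 2 \<in> ?V" "Cv 1 \<in> ?V" "Cv 2 \<in> ?V"
    using assms by (auto simp: spider_V_def)
  have ss_C: "Cv k \<notin> set ss" for k
    by (auto simp: ss_def)
  have "is_DNS ?V thick_E ss"
    unfolding ss_def
    by (rule is_DNS_if_independent) (auto simp: distinct_map inj_on_def spider_V_def)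
  moreover have "dom_count ?V thick_E ss (Sv 1) = 1" "dom_count ?V thick_E ss (Sv 2) = 1"
    using assms by (simp_all add: ss_def thick_dom_count_map_Sv del: upt_Suc)
  ultimately have "is_DNS ?V thick_E (ss @ [Cv 1])"
    unfolding is_DNS_snoc using in_V ss_C
    by (intro conjI bexI[of _ "Sv 2"]) (simp_all add: thick_closed_nbhd_Cv)
  moreover have "Cv 2 \<notin> set (ss @ [Cv 1])"
    using ss_C by simp
  moreover have "Sv 1 \<in> closed_nbhd ?V thick_E (Cv 2)"
    using in_V by (simp add: thick_closed_nbhd_Cv)
  moreover have "dom_count ?V thick_E (ss @ [Cv 1]) (Sv 1) \<le> 1"
    using in_V \<open>dom_count ?V thick_E ss (Sv 1) = 1\<close> by (simp add: thick_closed_nbhd_Cv)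
  ultimately have "is_DNS ?V thick_E ((ss @ [Cv 1]) @ [Cv 2])"
    unfolding is_DNS_snoc using in_V by blast
  then show ?thesis
    by (simp add: ss_def)
qed

lemma thick_card_Cv_le_dom_count:
  assumes "w \<in> spider_V r" "w \<in> range Cv \<or> w \<in> set xs"
  shows "card (set xs \<inter> range Cv) \<le> dom_count (spider_V r) thick_E xs w"
proof -
  let ?D = "{u \<in> set xs. w \<in> closed_nbhd (spider_V r) thick_E u}"
  have dominated: "Cv j \<in> ?D" if "Cv j \<in> set xs" "w \<noteq> Sv j" for j
    using that assms(1) by (simp add: thick_closed_nbhd_Cv)
  have "card (set xs \<inter> range Cv) \<le> card ?D"
  proof (cases w)
    case (Cv k)
    then have "set xs \<inter> range Cv \<subseteq> ?D"
      using dominated by blast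
    then show ?thesis
      by (intro card_mono) auto
  next
    case (Sv m)
    have "w \<in> ?D"
      using assms(2) Sv by (auto simp: self_mem_closed_nbhd)
    then have "insert w (set xs \<inter> range Cv - {Cv m}) \<subseteq> ?D"
      using dominated Sv by blast
    then have "card (insert w (set xs \<inter> range Cv - {Cv m})) \<le> card ?D"
      by (intro card_mono) auto
    moreover have "card (set xs \<inter> range Cv) \<le> card (insert w (set xs \<inter> range Cv - {Cv m}))"
      using Sv by (subst card_insert_disjoint) (auto simp: card_Diff_singleton_if)
    ultimately show ?thesis
      by linarith
  qed
  then show ?thesis
    using card_dominators_le_dom_count[of xs w "spider_V r" thick_E] by linarith
qed

lemma thick_card_Cv_le_Suc_dom_count:
  assumes "w \<in> spider_V r"
  shows "card (set xs \<inter> range Cv) \<le> Suc (dom_count (spider_V r) thick_E xs w)"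
proof -
  let ?D = "{u \<in> set xs. w \<in> closed_nbhd (spider_V r) thick_E u}"
  define k where "k = (case w of Sv m \<Rightarrow> m | Cv _ \<Rightarrow> 0)"
    \<comment> \<open>\<open>Cv k\<close> is the only C-vertex that may fail to dominate \<open>w\<close>; the \<open>0\<close> is arbitrary\<close>
  have "set xs \<inter> range Cv - {Cv k} \<subseteq> ?D"
    using assms by (cases w) (auto simp: k_def thick_closed_nbhd_Cv)
  then have "card (set xs \<inter> range Cv - {Cv k}) \<le> card ?D"
    by (intro card_mono) auto
  then have "card (set xs \<inter> range Cv) \<le> Suc (card ?D)"
    by (simp add: card_Diff_singleton_if split: if_splits)
  then show ?thesis
    using card_dominators_le_dom_count[of xs w "spider_V r" thick_E] by simp
qed

lemma thick_DNS_length_le: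
  assumes "is_DNS (spider_V r) thick_E vs"
  shows "length vs \<le> r + 2"
proof (cases vs rule: rev_exhaust)
  case (snoc xs v)
  let ?V = "spider_V r" and ?C = "\<lambda>A. card (A \<inter> range Cv)"
  obtain w where w: "w \<in> closed_nbhd ?V thick_E v" "dom_count ?V thick_E xs w \<le> 1"
    and v: "v \<in> ?V" "v \<notin> set xs"
    using assms snoc by (auto simp: is_DNS_snoc)
  have wV: "w \<in> ?V"
    using closed_nbhd_subset[OF v(1)] w(1) by blast
  have set_vs: "set vs \<subseteq> ?V" and len: "length vs = card (set vs)"
    using assms by (auto simp: is_DNS_def distinct_card)
  have xs_C: "?C (set xs) \<le> 2"
    using thick_card_Cv_le_Suc_dom_count[OF wV, of xs] w(2) by simp
  have vs_C: "set vs \<inter> range Cv = (if v \<in> range Cv then insert v (set xs \<inter> range Cv) else set xs \<inter> range Cv)"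
    using snoc by auto
  have "?C (set vs) \<le> 2 + card (Sv ` {1..r} - set vs)"
  proof (cases "v \<in> range Cv \<and> ?C (set xs) = 2")
    case True
    then have "?C (set vs) = 3"
      using vs_C v(2) by (simp add: card_insert_if)
    moreover have "w \<notin> range Cv" "w \<notin> set xs"
      using thick_card_Cv_le_dom_count[OF wV, of xs] True w(2) by auto
    then have "w \<in> Sv ` {1..r} - set vs"
      using wV True snoc by (auto simp: spider_V_def)
    then have "card (Sv ` {1..r} - set vs) \<ge> 1"
      by (metis One_nat_def Suc_leI card_gt_0_iff empty_iff finite_Diff finite_atLeastAtMost finite_imageI)
    ultimately show ?thesis
      by simp
  next
    case False
    have "?C (set vs) \<le> 2"
    proof (cases "v \<in> range Cv")
      case True
      then have "?C (set xs) \<le> 1"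
        using False xs_C by simp
      then show ?thesis
        using True vs_C by (simp add: card_insert_if)
    next
      case False
      then show ?thesis
        using vs_C xs_C by simp
    qed
    then show ?thesis
      by simp
  qed
  then show ?thesis
    using card_spider_subset[OF set_vs] len by simp
qed simp

theorem lemma5:
  fixes r :: nat
  shows "(r \<ge> 2 \<longrightarrow>
            gamma_gr2 (spider_V r) thin_E = 2 * r \<and>
            is_MDNS (spider_V r) thin_E (map Cv [1..<r+1] @ map Sv [1..<r+1]))
       \<and> (r \<ge> 3 \<longrightarrow>
            gamma_gr2 (spider_V r) thick_E = r + 2 \<and>
            is_MDNS (spider_V r) thick_E (map Sv [1..<r+1] @ [Cv 1, Cv 2]))"
proof (intro conjI impI)
  let ?thin = "map Cv [1..<r+1] @ map Sv [1..<r+1]"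
  have "finite (spider_V r)"
    by (simp add: spider_V_def)
  moreover have "is_DNS (spider_V r) thin_E ?thin"
    by (rule is_DNS_thin) (auto simp: distinct_map inj_on_def spider_V_def)
  moreover have "length ?thin = card (spider_V r)"
    by (simp add: card_spider_V del: upt_Suc)
  ultimately show thin: "is_MDNS (spider_V r) thin_E ?thin"
    unfolding is_MDNS_def using is_DNS_length_le_card by metis
  show "gamma_gr2 (spider_V r) thin_E = 2 * r"
    using gamma_gr2_eq_length_if_MDNS[OF thin] by (simp add: mult_2 del: upt_Suc)
next
  assume "r \<ge> 3"
  then show thick: "is_MDNS (spider_V r) thick_E (map Sv [1..<r+1] @ [Cv 1, Cv 2])"
    unfolding is_MDNS_def using is_DNS_thick thick_DNS_length_le by simp
  show "gamma_gr2 (spider_V r) thick_E = r + 2"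
    using gamma_gr2_eq_length_if_MDNS[OF thick] by simp
qed

end
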